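(* Let $\mathcal{X}\subset\mathbb{R}^d$, let $k:\mathcal{X}\times\mathcal{X}\to(0,\infty)$ be a symmetric continuous covariance function, let $\bm{x}_1,\dots,\bm{x}_n\in\mathcal{X}$, let $\omega_1,\dots,\omega_n\in\{1,\dots,m\}$ be assignments with every $j\in\{1,\dots,m\}$ assigned to some index, and let $\bm{z}_1,\dots,\bm{z}_m\in\mathcal{X}$. Let $\beta\in(0,\infty)$ satisfy $|k(\bm{x}_i,\bm{x}_j)-k(\bm{z}_{\omega_i},\bm{z}_{\omega_j})|<\beta$ for all $1\le i\le j\le n$ (and $|k(\bm{x}_i,\bm{x}^*_j)-k(\bm{z}_{\omega_i},\bm{x}^*_j)|<\beta$ for given new inputs $\bm{x}^*_1,\dots,\bm{x}^*_{n_*}\in\mathcal{X}$). Let $\gamma$ denote the maximum absolute value of the elements of $\bm{W_{fu}}-\bm{K_{fu}}\bm{K_{uu}}^{-1}$. Then $$\bm{K_{ff}}-\bm{K_{fu}}\bm{K_{uu}}^{-1}\bm{K_{uf}}=O(\beta+m\beta\gamma).$$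
   Context: For finite lists of points $\bm{A}=(\bm{a}_i)$, $\bm{B}=(\bm{b}_j)$ in $\mathcal{X}$, the Gram matrix of $(\bm{A},\bm{B})$ has $(i,j)$ entry $k(\bm{a}_i,\bm{b}_j)$. With $\bm{X}=(\bm{x}_i)_{i=1}^n$, $\bm{Z}=(\bm{z}_j)_{j=1}^m$: $\bm{K_{ff}}$, $\bm{K_{fu}}$, $\bm{K_{uu}}$ are the Gram matrices of $(\bm{X},\bm{X})$, $(\bm{X},\bm{Z})$, $(\bm{Z},\bm{Z})$, and $\bm{K_{uf}}=\bm{K_{fu}}^\top$. Symmetric Gram matrices are assumed positive-definite. $\bm{W_{fu}}$ is the $n\times m$ matrix with $[\bm{W_{fu}}]_{ij}=1$ if $\omega_i=j$, $0$ otherwise. The Landau symbol $O$ applied to a matrix is applied to each element.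
   Formalization: The condition $|k(\bm{x}_i,\bm{x}^*_j)-k(\bm{z}_{\omega_i},\bm{x}^*_j)|<\beta$ holds with $\bm{x}^*_j$ ranging over all of $\mathcal{X}$, the $\bm{z}_j$ included, and the O-constant is one constant independent of all data. Apart from conventions, each condition added here is assumed in the paper as well or is needed for the statement above to hold. *)

theory Defs
  imports "HOL-Analysis.Analysis" "Jordan_Normal_Form.Gauss_Jordan_Elimination"
begin

definition gram :: "('a \<Rightarrow> 'a \<Rightarrow> real) \<Rightarrow> nat \<Rightarrow> (nat \<Rightarrow> 'a) \<Rightarrow> nat \<Rightarrow> (nat \<Rightarrow> 'a) \<Rightarrow> real mat" where
  "gram k p a q b = mat p q (\<lambda>(i, j). k (a i) (b j))"

definition mat_inv :: "real mat \<Rightarrow> real mat" where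
  "mat_inv A = the (mat_inverse A)"

definition assign_mat :: "nat \<Rightarrow> nat \<Rightarrow> (nat \<Rightarrow> nat) \<Rightarrow> real mat" where
  "assign_mat n m \<omega> = mat n m (\<lambda>(i, j). if \<omega> i = j then 1 else 0)"

definition pos_def_mat :: "real mat \<Rightarrow> bool" where
  "pos_def_mat A \<longleftrightarrow> A \<in> carrier_mat (dim_row A) (dim_row A) \<and> A\<^sup>T = A \<and>
     (\<forall>v \<in> carrier_vec (dim_row A). v \<noteq> 0\<^sub>v (dim_row A) \<longrightarrow> v \<bullet> (A *\<^sub>v v) > 0)"

definition max_abs_entry :: "real mat \<Rightarrow> real" where
  "max_abs_entry A = Max {\<bar>A $$ (i, j)\<bar> | i j. i < dim_row A \<and> j < dim_col A}"

end

theory Submission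
  imports Defs "Jordan_Normal_Form.Determinant"
begin

text \<open>Write \<open>A = K\<^sub>f\<^sub>u K\<^sub>u\<^sub>u\<^sup>-\<^sup>1\<close>, so that \<open>A K\<^sub>u\<^sub>u = K\<^sub>f\<^sub>u\<close> and
  \<open>R = K\<^sub>f\<^sub>f - A K\<^sub>u\<^sub>f\<close>. Row \<open>i\<close> of \<open>A\<close> reproduces \<open>k(x\<^sub>i, \<cdot>)\<close> on the inducing points
  and is within \<open>\<gamma>\<close> of the indicator of \<open>\<omega>\<^sub>i\<close>. Comparing \<open>x\<^sub>j\<close> with its inducing point
  \<open>z\<^sub>\<omega>\<^sub>j\<close> in the second argument gives
  \<open>R\<^sub>i\<^sub>j = (k(x\<^sub>i,x\<^sub>j) - k(x\<^sub>i,z\<^sub>\<omega>\<^sub>j)) - \<Sum>\<^sub>a A\<^sub>i\<^sub>a d\<^sub>a\<close> with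
  \<open>d\<^sub>a = k(x\<^sub>j,z\<^sub>a) - k(z\<^sub>\<omega>\<^sub>j,z\<^sub>a)\<close>, all of size below \<open>\<beta>\<close>; and the weighted sum differs from
  \<open>d\<^sub>\<omega>\<^sub>i\<close> by at most \<open>m\<beta>\<gamma>\<close>. Hence \<open>|R\<^sub>i\<^sub>j| \<le> 2\<beta> + m\<beta>\<gamma>\<close>.
  Besides symmetry of \<open>k\<close> and invertibility of \<open>K\<^sub>u\<^sub>u\<close>, only the comparison of
  \<open>k(x\<^sub>j,\<cdot>)\<close> with \<open>k(z\<^sub>\<omega>\<^sub>j,\<cdot>)\<close> is used.\<close>

lemma sum_near_indicator_weights:
  fixes w d :: "nat \<Rightarrow> real"
  assumes "c < m"
    and weights: "\<And>a. a < m \<Longrightarrow> \<bar>(if a = c then 1 else 0) - w a\<bar> \<le> \<gamma>"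
    and small: "\<And>a. a < m \<Longrightarrow> \<bar>d a\<bar> \<le> \<beta>"
  shows "\<bar>(\<Sum>a<m. w a * d a) - d c\<bar> \<le> real m * \<beta> * \<gamma>"
proof -
  have "d c = (\<Sum>a<m. (if a = c then 1 else 0) * d a)"
    using \<open>c < m\<close> by (simp add: if_distrib if_distribR sum.delta' cong: if_cong)
  then have "(\<Sum>a<m. w a * d a) - d c = - (\<Sum>a<m. ((if a = c then 1 else 0) - w a) * d a)"
    by (simp add: sum_subtractf algebra_simps)
  then have "\<bar>(\<Sum>a<m. w a * d a) - d c\<bar> = \<bar>\<Sum>a<m. ((if a = c then 1 else 0) - w a) * d a\<bar>"
    by simp
  also have "\<dots> \<le> (\<Sum>a<m. \<bar>((if a = c then 1 else 0) - w a) * d a\<bar>)"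
    by (rule sum_abs)
  also have "\<dots> \<le> (\<Sum>a<m. \<gamma> * \<beta>)"
    using weights small by (intro sum_mono) (simp add: abs_mult mult_mono' del: of_nat_less_iff)
  finally show ?thesis
    by (simp add: ac_simps)
qed

lemma kernel_approximation_residual_bound:
  fixes k :: "'a \<Rightarrow> 'a \<Rightarrow> real" and w :: "nat \<Rightarrow> real"
  assumes sym: "\<And>a b. a \<in> X \<Longrightarrow> b \<in> X \<Longrightarrow> k a b = k b a"
    and "u \<in> X" "v \<in> X" and z: "\<And>a. a < m \<Longrightarrow> z a \<in> X" and "c < m" "c' < m"
    and reproduces: "\<And>b. b < m \<Longrightarrow> (\<Sum>a<m. w a * k (z a) (z b)) = k u (z b)"
    and weights: "\<And>a. a < m \<Longrightarrow> \<bar>(if a = c then 1 else 0) - w a\<bar> \<le> \<gamma>"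
    and close: "\<And>y. y \<in> X \<Longrightarrow> \<bar>k v y - k (z c') y\<bar> < \<beta>"
  shows "\<bar>k u v - (\<Sum>a<m. w a * k v (z a))\<bar> \<le> 2 * \<beta> + real m * \<beta> * \<gamma>"
proof -
  define d where "d a = k v (z a) - k (z c') (z a)" for a
  have d_bound: "\<bar>d a\<bar> \<le> \<beta>" if "a < m" for a
    using close[of "z a"] z that by (simp add: d_def)
  have "(\<Sum>a<m. w a * k v (z a)) = (\<Sum>a<m. w a * k (z a) (z c')) + (\<Sum>a<m. w a * d a)"
    using sym z \<open>c' < m\<close> by (simp add: d_def algebra_simps sum.distrib[symmetric])
  also have "(\<Sum>a<m. w a * k (z a) (z c')) = k u (z c')"
    using reproduces \<open>c' < m\<close> .
  finally have "k u v - (\<Sum>a<m. w a * k v (z a))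
      = (k v u - k (z c') u) - d c - ((\<Sum>a<m. w a * d a) - d c)"
    using sym \<open>u \<in> X\<close> \<open>v \<in> X\<close> z \<open>c' < m\<close> by simp
  moreover have "\<bar>k v u - k (z c') u\<bar> < \<beta>" "\<bar>d c\<bar> \<le> \<beta>"
    using close \<open>u \<in> X\<close> d_bound \<open>c < m\<close> by auto
  moreover have "\<bar>(\<Sum>a<m. w a * d a) - d c\<bar> \<le> real m * \<beta> * \<gamma>"
    using \<open>c < m\<close> weights d_bound by (rule sum_near_indicator_weights)
  ultimately show ?thesis
    by linarith
qed

lemma dim_gram [simp]: "dim_row (gram k p a q b) = p" "dim_col (gram k p a q b) = q"
  by (simp_all add: gram_def)

lemma gram_carrier_mat [simp]: "gram k p a q b \<in> carrier_mat p q"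
  by (simp add: carrier_matI)

lemma index_gram [simp]: "i < p \<Longrightarrow> j < q \<Longrightarrow> gram k p a q b $$ (i, j) = k (a i) (b j)"
  by (simp add: gram_def)

lemma index_assign_mat [simp]:
  "i < n \<Longrightarrow> j < m \<Longrightarrow> assign_mat n m \<omega> $$ (i, j) = (if \<omega> i = j then 1 else 0)"
  by (simp add: assign_mat_def)

lemma index_mult_mat_sum:
  assumes "A \<in> carrier_mat n l" "B \<in> carrier_mat l p" "i < n" "j < p"
  shows "(A * B) $$ (i, j) = (\<Sum>a<l. A $$ (i, a) * B $$ (a, j))"
  using assms by (auto simp: scalar_prod_def lessThan_atLeast0 intro: sum.cong)

lemma abs_index_le_max_abs_entry:
  assumes "i < dim_row A" "j < dim_col A"
  shows "\<bar>A $$ (i, j)\<bar> \<le> max_abs_entry A"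
proof -
  have "{\<bar>A $$ (i, j)\<bar> | i j. i < dim_row A \<and> j < dim_col A}
      = (\<lambda>(i, j). \<bar>A $$ (i, j)\<bar>) ` ({..<dim_row A} \<times> {..<dim_col A})"
    by auto
  then show ?thesis
    unfolding max_abs_entry_def using assms by (auto intro: Max_ge)
qed

lemma max_abs_entry_nonneg:
  assumes "0 < dim_row A" "0 < dim_col A"
  shows "0 \<le> max_abs_entry A"
  using abs_index_le_max_abs_entry[OF assms] by (rule order_trans[OF abs_ge_zero])

lemma pos_def_mat_mult_inv:
  assumes "pos_def_mat K" and K: "K \<in> carrier_mat m m"
  shows "mat_inv K \<in> carrier_mat m m" "mat_inv K * K = 1\<^sub>m m"
proof -
  have "\<not> (\<exists>v. v \<in> carrier_vec m \<and> v \<noteq> 0\<^sub>v m \<and> K *\<^sub>v v = 0\<^sub>v m)"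
  proof
    assume "\<exists>v. v \<in> carrier_vec m \<and> v \<noteq> 0\<^sub>v m \<and> K *\<^sub>v v = 0\<^sub>v m"
    then obtain v where v: "v \<in> carrier_vec m" "v \<noteq> 0\<^sub>v m" "K *\<^sub>v v = 0\<^sub>v m"
      by blast
    then have "v \<bullet> (K *\<^sub>v v) > 0"
      using assms unfolding pos_def_mat_def by auto
    with v show False
      by simp
  qed
  then have "K \<in> Units (ring_mat TYPE(real) m ())"
    using K by (simp add: det_non_zero_imp_unit det_0_iff_vec_prod_zero_field)
  then obtain B where "mat_inverse K = Some B"
    using mat_inverse(1)[OF K] by fastforce
  then show "mat_inv K \<in> carrier_mat m m" "mat_inv K * K = 1\<^sub>m m"
    using mat_inverse(2)[OF K] by (auto simp: mat_inv_def)
qed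

lemma projected_process_residual_bound:
  fixes k :: "'a \<Rightarrow> 'a \<Rightarrow> real"
  assumes sym: "\<And>a b. a \<in> X \<Longrightarrow> b \<in> X \<Longrightarrow> k a b = k b a"
    and x: "\<And>i. i < n \<Longrightarrow> x i \<in> X" and z: "\<And>a. a < m \<Longrightarrow> z a \<in> X"
    and \<omega>: "\<And>i. i < n \<Longrightarrow> \<omega> i < m"
    and pd: "pos_def_mat (gram k m z m z)"
    and close: "\<And>y i. y \<in> X \<Longrightarrow> i < n \<Longrightarrow> \<bar>k (x i) y - k (z (\<omega> i)) y\<bar> < \<beta>"
    and "i < n" "j < n"
  defines "A \<equiv> gram k n x m z * mat_inv (gram k m z m z)"
  shows "\<bar>(gram k n x n x - A * (gram k n x m z)\<^sup>T) $$ (i, j)\<bar>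
    \<le> 2 * \<beta> + real m * \<beta> * max_abs_entry (assign_mat n m \<omega> - A)"
proof -
  let ?Kfu = "gram k n x m z" and ?Kuu = "gram k m z m z"
  have inv: "mat_inv ?Kuu \<in> carrier_mat m m" "mat_inv ?Kuu * ?Kuu = 1\<^sub>m m"
    using pos_def_mat_mult_inv[OF pd] by auto
  then have A: "A \<in> carrier_mat n m"
    unfolding A_def by (metis gram_carrier_mat mult_carrier_mat)
  have "A * ?Kuu = ?Kfu * (mat_inv ?Kuu * ?Kuu)"
    unfolding A_def using inv by (simp add: assoc_mult_mat[of _ n m _ m _ m])
  also have "\<dots> = ?Kfu"
    using inv by (simp add: right_mult_one_mat[OF gram_carrier_mat])
  finally have A_Kuu: "A * ?Kuu = ?Kfu" .
  have "\<bar>k (x i) (x j) - (\<Sum>a<m. A $$ (i, a) * k (x j) (z a))\<bar>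
      \<le> 2 * \<beta> + real m * \<beta> * max_abs_entry (assign_mat n m \<omega> - A)"
  proof (rule kernel_approximation_residual_bound[where X = X and c = "\<omega> i" and c' = "\<omega> j"])
    show "(\<Sum>a<m. A $$ (i, a) * k (z a) (z b)) = k (x i) (z b)" if "b < m" for b
      using arg_cong[OF A_Kuu, of "\<lambda>M. M $$ (i, b)"] index_mult_mat_sum[OF A _ \<open>i < n\<close> that]
        \<open>i < n\<close> that by simp
    show "\<bar>(if a = \<omega> i then 1 else 0) - A $$ (i, a)\<bar> \<le> max_abs_entry (assign_mat n m \<omega> - A)"
      if "a < m" for a
      using abs_index_le_max_abs_entry[of i "assign_mat n m \<omega> - A" a] A \<open>i < n\<close> that
      by (auto simp: eq_commute[of a])
  qed (use assms x z \<omega> in auto)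
  moreover have "(A * ?Kfu\<^sup>T) $$ (i, j) = (\<Sum>a<m. A $$ (i, a) * k (x j) (z a))"
    using index_mult_mat_sum[OF A _ \<open>i < n\<close> \<open>j < n\<close>, of "?Kfu\<^sup>T"] \<open>j < n\<close> by (auto intro!: sum.cong)
  ultimately show ?thesis
    using A \<open>i < n\<close> \<open>j < n\<close> by simp
qed

theorem lemma2:
  "\<exists>C::real. \<forall>(X :: (real^'d) set) (k :: real^'d \<Rightarrow> real^'d \<Rightarrow> real)
      (n::nat) (m::nat) (x :: nat \<Rightarrow> real^'d) (\<omega> :: nat \<Rightarrow> nat) (z :: nat \<Rightarrow> real^'d) (\<beta>::real).
     ( (\<forall>a\<in>X. \<forall>b\<in>X. k a b > 0 \<and> k a b = k b a)
     \<and> continuous_on (X \<times> X) (\<lambda>(a, b). k a b)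
     \<and> 0 < n \<and> 0 < m
     \<and> (\<forall>i<n. x i \<in> X) \<and> (\<forall>j<m. z j \<in> X)
     \<and> (\<forall>i<n. \<omega> i < m) \<and> (\<forall>j<m. \<exists>i<n. \<omega> i = j)
     \<and> pos_def_mat (gram k n x n x) \<and> pos_def_mat (gram k m z m z)
     \<and> 0 < \<beta>
     \<and> (\<forall>i j. i \<le> j \<and> j < n \<longrightarrow> \<bar>k (x i) (x j) - k (z (\<omega> i)) (z (\<omega> j))\<bar> < \<beta>)
     \<and> (\<forall>xs\<in>X. \<forall>i<n. \<bar>k (x i) xs - k (z (\<omega> i)) xs\<bar> < \<beta>) )
     \<longrightarrow> (let Kff = gram k n x n x; Kfu = gram k n x m z; Kuu = gram k m z m z;
             Kuf = Kfu\<^sup>T; W = assign_mat n m \<omega>;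
             \<gamma> = max_abs_entry (W - Kfu * mat_inv Kuu);
             R = Kff - Kfu * mat_inv Kuu * Kuf
         in \<forall>i<n. \<forall>j<n. \<bar>R $$ (i, j)\<bar> \<le> C * (\<beta> + real m * \<beta> * \<gamma>))"
proof (intro exI[of _ 2] allI impI, unfold Let_def, intro allI impI, elim conjE, goal_cases)
  case (1 X k n m x \<omega> z \<beta> i j)
  let ?A = "gram k n x m z * mat_inv (gram k m z m z)"
  let ?\<gamma> = "max_abs_entry (assign_mat n m \<omega> - ?A)"
  have "\<bar>(gram k n x n x - ?A * (gram k n x m z)\<^sup>T) $$ (i, j)\<bar> \<le> 2 * \<beta> + real m * \<beta> * ?\<gamma>"
    using 1 by (intro projected_process_residual_bound[where X = X]) auto
  also have "\<dots> \<le> 2 * (\<beta> + real m * \<beta> * ?\<gamma>)"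
  proof -
    have "mat_inv (gram k m z m z) \<in> carrier_mat m m"
      using pos_def_mat_mult_inv(1) 1 by simp
    then have "0 \<le> ?\<gamma>"
      using 1 by (intro max_abs_entry_nonneg) auto
    then show ?thesis
      using 1 by simp
  qed
  finally show ?case .
qed

end
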